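(* For every trie $\mathcal T$ with $n$ nodes over an alphabet of size $\sigma$ and every integer $k\ge0$, the number $r$ of XBWT runs of $\mathcal T$ satisfies $r\le n\mathcal H_k(\mathcal T)+\sigma^{k+1}$.
   Context: A trie over a finite totally ordered alphabet $\Sigma$ is a rooted ordered tree with edges labeled by symbols of $\Sigma$ such that edges leaving the same node have distinct labels and siblings are ordered by their incoming labels. For node $u$: $out(u)$ is the set of labels of edges leaving $u$; $\lambda(u)$ is the label of the edge entering $u$, with $\lambda(\text{root})=\#\notin\Sigma$; $\pi(u)$ the parent, $\pi(\text{root})=\text{root}$; $\lambda_0(u)=\epsilon$, $\lambda_k(u)=\lambda_{k-1}(\pi(u))\cdot\lambda(u)$; $n_w=|\{u:\lambda_k(u)=w\}|$, $n_{w,c}=|\{u:\lambda_k(u)=w,\ c\in out(u)\}|$. Logs base 2, $0\log(x/0)=0$. $\mathcal H_k(\mathcal T)=\sum_{w}\sum_{c\in\Sigma}\left[\frac{n_{w,c}}{n}\log\frac{n_w}{n_{w,c}}+\frac{n_w-n_{w,c}}{n}\log\frac{n_w}{n_w-n_{w,c}}\right]$ over contexts $w$ with $n_w>0$. Let $u_1,\dots,u_n$ be the nodes sorted co-lexicographically (right-to-left comparison, $\epsilon$ smallest) by the root-to-node path label. An index $i\in[n]$ is a $c$-run break if $c\in out(u_i)$ and either $i=n$ or $c\notin out(u_{i+1})$; $r=\sum_{c\in\Sigma}r_c$ where $r_c$ is the number of $c$-run breaks. *)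

theory Defs
  imports Complex_Main "HOL-Library.List_Lexorder"
begin

text \<open>A trie over the alphabet Sig is represented by the (finite, prefix-closed) set of its
  root-to-node path labels; each node is identified with its path label, the root with [].\<close>

definition is_trie :: "'a set \<Rightarrow> 'a list set \<Rightarrow> bool" where
  "is_trie Sig T \<longleftrightarrow> finite T \<and> [] \<in> T \<and> (\<forall>s\<in>T. set s \<subseteq> Sig)
     \<and> (\<forall>s c. s @ [c] \<in> T \<longrightarrow> s \<in> T)"

definition out :: "'a list set \<Rightarrow> 'a list \<Rightarrow> 'a set" where
  "out T u = {c. u @ [c] \<in> T}"

text \<open>lambda(u): label of the incoming edge; None plays the role of the symbol # (root).\<close>
definition lam :: "'a list \<Rightarrow> 'a option" where
  "lam u = (if u = [] then None else Some (last u))"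

text \<open>pi(u): parent; butlast [] = [] so pi(root) = root.\<close>
definition par :: "'a list \<Rightarrow> 'a list" where
  "par u = butlast u"

fun lamk :: "nat \<Rightarrow> 'a list \<Rightarrow> 'a option list" where
  "lamk 0 u = []"
| "lamk (Suc k) u = lamk k (par u) @ [lam u]"

definition n_w :: "nat \<Rightarrow> 'a list set \<Rightarrow> 'a option list \<Rightarrow> nat" where
  "n_w k T w = card {u \<in> T. lamk k u = w}"

definition n_wc :: "nat \<Rightarrow> 'a list set \<Rightarrow> 'a option list \<Rightarrow> 'a \<Rightarrow> nat" where
  "n_wc k T w c = card {u \<in> T. lamk k u = w \<and> c \<in> out T u}"

text \<open>k-th order empirical entropy; contexts w with n_w > 0 are exactly lamk k ` T.
  (Terms with a zero numerator vanish since 0 * _ = 0, matching 0 log(x/0) = 0.)\<close>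
definition Hk :: "'a set \<Rightarrow> nat \<Rightarrow> 'a list set \<Rightarrow> real" where
  "Hk Sig k T = (let n = real (card T) in
     (\<Sum>w\<in>lamk k ` T. \<Sum>c\<in>Sig.
        real (n_wc k T w c) / n * log 2 (real (n_w k T w) / real (n_wc k T w c))
      + real (n_w k T w - n_wc k T w c) / n
          * log 2 (real (n_w k T w) / real (n_w k T w - n_wc k T w c))))"

text \<open>Nodes sorted co-lexicographically: sort the reversed path labels lexicographically
  (List_Lexorder: a proper prefix is smaller, so epsilon is smallest), then reverse back.\<close>
definition colex_nodes :: "('a::linorder) list set \<Rightarrow> 'a list list" where
  "colex_nodes T = map rev (sorted_list_of_set (rev ` T))"

text \<open>Number of XBWT runs r = sum over c of the number of c-run breaks (0-based indices).\<close>
definition xbwt_runs :: "('a::linorder) set \<Rightarrow> 'a list set \<Rightarrow> nat" where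
  "xbwt_runs Sig T = (let us = colex_nodes T; n = card T in
     \<Sum>c\<in>Sig. card {i. i < n \<and> c \<in> out T (us ! i)
                      \<and> (i = n - 1 \<or> c \<notin> out T (us ! Suc i))})"

end

theory Submission
  imports Defs
begin

(* Nodes with the same order-k context form a contiguous block of the co-lexicographic order:
   co-lex order sorts the reversed path labels lexicographically, and the context is determined
   by their first k symbols. Inside the block of a context, every c-run break except one at the
   end of the block is followed by a node of the block without an outgoing c-edge. So a block
   with a nodes having a c-edge and b nodes without one has at most min a (b + 1) c-run breaks,
   which for a, b >= 1 is at most a log((a+b)/a) + b log((a+b)/b), its share of n H_k.
   The breaks not paid for in this way lie in blocks all of whose nodes have a c-edge; the block
   following such a block is not of this kind, so for each c there are at most (|W| + 1) / 2 of
   them, W being the set of occurring contexts, and |W| + 1 <= 2 sigma^k when sigma >= 2.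
   For sigma = 1 the trie is a path and has at most one run. *)

lemma lamk_conv_take_rev:
  "lamk k u = replicate (k - length u) None @ map Some (rev (take k (rev u)))"
proof (induction k arbitrary: u)
  case 0
  then show ?case by simp
next
  case (Suc k)
  show ?case
  proof (cases u rule: rev_cases)
    case Nil
    then show ?thesis using Suc by (simp add: lam_def par_def replicate_append_same)
  next
    case (snoc u' x)
    then show ?thesis using Suc by (simp add: lam_def par_def)
  qed
qed

lemma lamk_eq_iff_take_rev: "lamk k u = lamk k v \<longleftrightarrow> take k (rev u) = take k (rev v)"
proof
  assume "lamk k u = lamk k v"
  then have "map the (removeAll None (lamk k u)) = map the (removeAll None (lamk k v))"
    by simp
  then show "take k (rev u) = take k (rev v)"
    by (simp add: lamk_conv_take_rev removeAll_filter_not_eq comp_def)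
next
  assume eq: "take k (rev u) = take k (rev v)"
  then have "min (length u) k = min (length v) k"
    by (metis length_rev length_take)
  then have "k - length u = k - length v"
    by (simp add: min_def split: if_splits)
  with eq show "lamk k u = lamk k v"
    by (simp add: lamk_conv_take_rev)
qed

lemma take_lex_mono:
  fixes xs ys :: "'a::linorder list"
  shows "xs \<le> ys \<Longrightarrow> take k xs \<le> take k ys"
proof (induction k arbitrary: xs ys)
  case (Suc k)
  then show ?case
    by (cases xs; cases ys) auto
qed simp

lemma sorted_rev_colex_nodes: "sorted (map rev (colex_nodes T))"
  unfolding colex_nodes_def by (simp add: comp_def)

context
  fixes T :: "'a::linorder list set"
  assumes fin: "finite T"
begin

lemma length_colex_nodes: "length (colex_nodes T) = card T"
  unfolding colex_nodes_def using fin by (simp add: card_image inj_on_def)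

lemma distinct_colex_nodes: "distinct (colex_nodes T)"
  unfolding colex_nodes_def using fin by (simp add: distinct_map inj_on_def)

lemma set_colex_nodes: "set (colex_nodes T) = T"
  unfolding colex_nodes_def using fin by (simp add: image_image)

lemma card_nodes_conv_colex:
  "card {u \<in> T. P u} = card {i. i < card T \<and> P (colex_nodes T ! i)}"
proof -
  have "card {i. i < card T \<and> P (colex_nodes T ! i)} = length (filter P (colex_nodes T))"
    by (simp add: length_filter_conv_card length_colex_nodes)
  also have "\<dots> = card {u \<in> T. P u}"
    by (simp add: distinct_length_filter distinct_colex_nodes set_colex_nodes Int_commute
        Collect_conj_eq)
  finally show ?thesis ..
qed

end

definition colex_ctx :: "nat \<Rightarrow> 'a::linorder list set \<Rightarrow> nat \<Rightarrow> 'a option list" where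
  "colex_ctx k T i = lamk k (colex_nodes T ! i)"

lemma colex_ctx_between:
  assumes "finite T" "i \<le> j" "j \<le> l" "l < card T" "colex_ctx k T l = colex_ctx k T i"
  shows "colex_ctx k T j = colex_ctx k T i"
proof -
  let ?v = "\<lambda>m. rev (colex_nodes T ! m)"
  have len: "length (colex_nodes T) = card T"
    using assms(1) by (rule length_colex_nodes)
  have "?v i \<le> ?v j" "?v j \<le> ?v l"
    using sorted_nth_mono[OF sorted_rev_colex_nodes, of i j T]
      sorted_nth_mono[OF sorted_rev_colex_nodes, of j l T] assms len by simp_all
  then have "take k (?v i) \<le> take k (?v j)" "take k (?v j) \<le> take k (?v l)"
    by (auto intro: take_lex_mono)
  moreover have "take k (?v l) = take k (?v i)"
    using assms(5) by (simp add: colex_ctx_def lamk_eq_iff_take_rev)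
  ultimately have "take k (?v j) = take k (?v i)"
    by (metis order_antisym)
  then show ?thesis
    by (simp add: colex_ctx_def lamk_eq_iff_take_rev)
qed

definition count_entropy :: "nat \<Rightarrow> nat \<Rightarrow> real" where
  "count_entropy a b =
     real a * log 2 (real (a + b) / real a) + real b * log 2 (real (a + b) / real b)"

lemma mult_log2_ratio_nonneg: "0 \<le> real a * log 2 (real (a + b) / real a)"
  by (cases "a = 0") auto

lemma count_entropy_nonneg: "count_entropy a b \<ge> 0"
  using mult_log2_ratio_nonneg[of a b] mult_log2_ratio_nonneg[of b a]
  by (simp add: count_entropy_def add.commute)

lemma count_entropy_0_right [simp]: "count_entropy a 0 = 0"
  unfolding count_entropy_def by (cases "a = 0") auto

lemma mult_log2_ratio_ge:
  assumes "1 \<le> a" "a \<le> b"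
  shows "real a \<le> real a * log 2 (real (a + b) / real a)"
proof -
  have "real (a + b) / real a \<ge> 2"
    using assms by (simp add: field_simps)
  then show ?thesis
    using assms by simp
qed

lemma min_le_count_entropy:
  assumes "a \<ge> 1" "b \<ge> 1"
  shows "real (min a (b + 1)) \<le> count_entropy a b"
proof (cases "a \<le> b")
  case True
  then show ?thesis
    using mult_log2_ratio_ge[OF assms(1) True] mult_log2_ratio_nonneg[of b a]
    by (simp add: count_entropy_def add.commute)
next
  case False
  have "(1 + real b / real a) ^ a \<ge> 1 + real a * (real b / real a)"
    by (rule Bernoulli_inequality) (simp add: order.trans[of _ 0])
  moreover have "1 + real a * (real b / real a) \<ge> 2"
    and "1 + real b / real a = real (a + b) / real a"
    using assms by (simp_all add: field_simps)
  ultimately have "(real (a + b) / real a) ^ a \<ge> 2"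
    by simp
  then have "real a * log 2 (real (a + b) / real a) \<ge> 1"
    using assms by (simp add: log_nat_power[symmetric])
  moreover have "real b \<le> real b * log 2 (real (b + a) / real b)"
    using False assms by (intro mult_log2_ratio_ge) simp_all
  ultimately show ?thesis
    by (simp add: count_entropy_def add.commute)
qed

lemma n_wc_le_n_w: "finite T \<Longrightarrow> n_wc k T w c \<le> n_w k T w"
  unfolding n_wc_def n_w_def by (rule card_mono) auto

lemma card_mult_Hk:
  assumes "finite T" "T \<noteq> {}"
  shows "real (card T) * Hk Sig k T
    = (\<Sum>w\<in>lamk k ` T. \<Sum>c\<in>Sig. count_entropy (n_wc k T w c) (n_w k T w - n_wc k T w c))"
proof -
  have "card T \<noteq> 0"
    using assms by simp
  then show ?thesis
    unfolding Hk_def Let_def sum_distrib_left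
    using n_wc_le_n_w[OF assms(1)]
    by (intro sum.cong refl) (simp add: count_entropy_def distrib_left)
qed

lemma Hk_nonneg:
  assumes "finite T" "T \<noteq> {}"
  shows "Hk Sig k T \<ge> 0"
proof -
  have "real (card T) * Hk Sig k T \<ge> 0"
    unfolding card_mult_Hk[OF assms] by (intro sum_nonneg count_entropy_nonneg)
  then show ?thesis
    using assms by (simp add: zero_le_mult_iff)
qed

definition has_edge :: "'a::linorder list set \<Rightarrow> 'a \<Rightarrow> nat \<Rightarrow> bool" where
  "has_edge T c i \<longleftrightarrow> c \<in> out T (colex_nodes T ! i)"

definition run_break :: "'a::linorder list set \<Rightarrow> 'a \<Rightarrow> nat \<Rightarrow> bool" where
  "run_break T c i \<longleftrightarrow>
     i < card T \<and> has_edge T c i \<and> (i = card T - 1 \<or> \<not> has_edge T c (Suc i))"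

lemma xbwt_runs_conv_run_break: "xbwt_runs Sig T = (\<Sum>c\<in>Sig. card {i. run_break T c i})"
  unfolding xbwt_runs_def run_break_def has_edge_def Let_def by simp

definition ctx_block :: "nat \<Rightarrow> 'a::linorder list set \<Rightarrow> 'a option list \<Rightarrow> nat set" where
  "ctx_block k T w = {i. i < card T \<and> colex_ctx k T i = w}"

lemma colex_ctx_in_lamk_image:
  "finite T \<Longrightarrow> i < card T \<Longrightarrow> colex_ctx k T i \<in> lamk k ` T"
  unfolding colex_ctx_def by (metis image_eqI length_colex_nodes nth_mem set_colex_nodes)

lemma ctx_block_interval:
  assumes "finite T" "i \<in> ctx_block k T w" "l \<in> ctx_block k T w" "i \<le> j" "j \<le> l"
  shows "j \<in> ctx_block k T w"
  using assms colex_ctx_between[of T i j l k] by (auto simp: ctx_block_def)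

lemma n_w_conv_ctx_block: "finite T \<Longrightarrow> n_w k T w = card (ctx_block k T w)"
  unfolding n_w_def ctx_block_def colex_ctx_def by (rule card_nodes_conv_colex)

lemma n_wc_conv_ctx_block:
  "finite T \<Longrightarrow> n_wc k T w c = card {i \<in> ctx_block k T w. has_edge T c i}"
  unfolding n_wc_def ctx_block_def colex_ctx_def has_edge_def
  by (simp add: card_nodes_conv_colex conj_assoc)

lemma card_run_break_conv_sum_ctx_block:
  assumes "finite T"
  shows "card {i. run_break T c i}
    = (\<Sum>w\<in>lamk k ` T. card {i \<in> ctx_block k T w. run_break T c i})"
proof -
  have "{i. run_break T c i} = (\<Union>w\<in>lamk k ` T. {i \<in> ctx_block k T w. run_break T c i})"
    using colex_ctx_in_lamk_image[OF assms] by (auto simp: ctx_block_def run_break_def)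
  moreover have "card (\<Union>w\<in>lamk k ` T. {i \<in> ctx_block k T w. run_break T c i})
      = (\<Sum>w\<in>lamk k ` T. card {i \<in> ctx_block k T w. run_break T c i})"
    using assms by (intro card_UN_disjoint) (auto simp: ctx_block_def)
  ultimately show ?thesis
    by simp
qed

lemma ctx_block_exit_unique:
  assumes "finite T" "i \<in> ctx_block k T w" "j \<in> ctx_block k T w"
    and "Suc i \<notin> ctx_block k T w" "Suc j \<notin> ctx_block k T w"
  shows "i = j"
proof -
  have False if "i' < j'" "i' \<in> ctx_block k T w" "j' \<in> ctx_block k T w"
    "Suc i' \<notin> ctx_block k T w" for i' j'
    using ctx_block_interval[OF assms(1) that(2,3), of "Suc i'"] that by simp
  then show ?thesis
    using assms by (metis linorder_neqE_nat)
qed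

lemma card_ctx_block_run_breaks_le:
  assumes "finite T"
  shows "card {i \<in> ctx_block k T w. run_break T c i}
    \<le> card {i \<in> ctx_block k T w. \<not> has_edge T c i} + 1"
proof -
  let ?B = "ctx_block k T w"
  define Inner where "Inner = {i \<in> ?B. run_break T c i \<and> Suc i \<in> ?B}"
  define Exit where "Exit = {i \<in> ?B. run_break T c i \<and> Suc i \<notin> ?B}"
  have fin: "finite ?B"
    by (simp add: ctx_block_def)
  have "Suc ` Inner \<subseteq> {i \<in> ?B. \<not> has_edge T c i}"
    by (auto simp: Inner_def run_break_def ctx_block_def)
  then have "card (Suc ` Inner) \<le> card {i \<in> ?B. \<not> has_edge T c i}"
    using fin by (intro card_mono) auto
  then have "card Inner \<le> card {i \<in> ?B. \<not> has_edge T c i}"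
    by (simp add: card_image)
  moreover have "card Exit \<le> 1"
    using fin ctx_block_exit_unique[OF assms]
    by (auto simp: Exit_def card_le_Suc0_iff_eq)
  moreover have "card {i \<in> ?B. run_break T c i} = card Inner + card Exit"
    using fin by (subst card_Un_disjoint[symmetric])
      (auto simp: Inner_def Exit_def intro: arg_cong[where f = card])
  ultimately show ?thesis
    by linarith
qed

(* The contexts whose entropy term vanishes although their block may still end a c-run. *)
definition full_ctxs :: "nat \<Rightarrow> 'a::linorder list set \<Rightarrow> 'a \<Rightarrow> 'a option list set" where
  "full_ctxs k T c = {w \<in> lamk k ` T.
     (\<forall>i\<in>ctx_block k T w. has_edge T c i) \<and> (\<exists>i\<in>ctx_block k T w. run_break T c i)}"

lemma card_ctx_block_run_breaks_le_entropy:
  assumes "finite T"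
  shows "real (card {i \<in> ctx_block k T w. run_break T c i})
    \<le> count_entropy (n_wc k T w c) (n_w k T w - n_wc k T w c)
       + (if w \<in> full_ctxs k T c then 1 else 0)"
proof -
  let ?B = "ctx_block k T w"
  define a where "a = card {i \<in> ?B. has_edge T c i}"
  define b where "b = card {i \<in> ?B. \<not> has_edge T c i}"
  define r where "r = card {i \<in> ?B. run_break T c i}"
  have fin: "finite ?B"
    by (simp add: ctx_block_def)
  have "card ?B = a + b"
    unfolding a_def b_def using fin by (subst card_Un_disjoint[symmetric]) (auto intro: arg_cong[where f = card])
  then have entropy: "count_entropy (n_wc k T w c) (n_w k T w - n_wc k T w c) = count_entropy a b"
    by (simp add: n_wc_conv_ctx_block n_w_conv_ctx_block assms a_def)
  have "r \<le> a"
    unfolding r_def a_def using fin by (intro card_mono) (auto simp: run_break_def)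
  moreover have "r \<le> b + 1"
    unfolding r_def b_def by (rule card_ctx_block_run_breaks_le[OF assms])
  ultimately consider "b = 0" | "a = 0" | "r \<le> min a (b + 1)" "a \<ge> 1" "b \<ge> 1"
    by linarith
  then show ?thesis
  proof cases
    case 1
    show ?thesis
    proof (cases "r = 0")
      case False
      then obtain i where "i \<in> ?B" "run_break T c i"
        unfolding r_def by (metis (no_types, lifting) card.empty empty_Collect_eq)
      moreover have "\<forall>i\<in>?B. has_edge T c i"
        using 1 fin by (simp add: b_def)
      ultimately have "w \<in> full_ctxs k T c"
        using colex_ctx_in_lamk_image[OF assms] by (force simp: full_ctxs_def ctx_block_def)
      then show ?thesis
        using 1 \<open>r \<le> b + 1\<close> entropy by (simp add: r_def)
    qed (simp add: r_def count_entropy_nonneg)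
  next
    case 2
    then show ?thesis
      using \<open>r \<le> a\<close> by (simp add: r_def count_entropy_nonneg)
  next
    case 3
    then have "real r \<le> count_entropy a b"
      using of_nat_mono[OF 3(1)] min_le_count_entropy[of a b] by linarith
    then show ?thesis
      using entropy by (simp add: r_def)
  qed
qed

lemma xbwt_runs_le_entropy_full_ctxs:
  assumes "finite T" "T \<noteq> {}"
  shows "real (xbwt_runs Sig T)
    \<le> real (card T) * Hk Sig k T + real (\<Sum>c\<in>Sig. card (full_ctxs k T c))"
proof -
  let ?W = "lamk k ` T"
  let ?H = "\<lambda>w c. count_entropy (n_wc k T w c) (n_w k T w - n_wc k T w c)"
  have "real (card {i. run_break T c i}) \<le> (\<Sum>w\<in>?W. ?H w c) + real (card (full_ctxs k T c))"
    for c
  proof -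
    have "real (card {i. run_break T c i})
        = (\<Sum>w\<in>?W. real (card {i \<in> ctx_block k T w. run_break T c i}))"
      using card_run_break_conv_sum_ctx_block[OF assms(1), of c k] by simp
    also have "\<dots> \<le> (\<Sum>w\<in>?W. ?H w c + (if w \<in> full_ctxs k T c then 1 else 0))"
      by (intro sum_mono card_ctx_block_run_breaks_le_entropy assms(1))
    also have "\<dots> = (\<Sum>w\<in>?W. ?H w c) + real (card (?W \<inter> full_ctxs k T c))"
      using assms(1) by (simp add: sum.distrib sum.If_cases)
    also have "?W \<inter> full_ctxs k T c = full_ctxs k T c"
      by (auto simp: full_ctxs_def)
    finally show ?thesis .
  qed
  then have "real (xbwt_runs Sig T)
      \<le> (\<Sum>c\<in>Sig. (\<Sum>w\<in>?W. ?H w c) + real (card (full_ctxs k T c)))"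
    unfolding xbwt_runs_conv_run_break of_nat_sum by (rule sum_mono)
  also have "\<dots> = real (card T) * Hk Sig k T + real (\<Sum>c\<in>Sig. card (full_ctxs k T c))"
    by (simp add: card_mult_Hk[OF assms] sum.distrib sum.swap[of _ Sig])
  finally show ?thesis .
qed

definition run_exits :: "nat \<Rightarrow> 'a::linorder list set \<Rightarrow> 'a \<Rightarrow> nat set" where
  "run_exits k T c =
     {i. Suc i < card T \<and> run_break T c i \<and> colex_ctx k T (Suc i) \<noteq> colex_ctx k T i}"

lemma full_ctxs_subset_run_exits:
  "full_ctxs k T c \<subseteq> insert (colex_ctx k T (card T - 1)) (colex_ctx k T ` run_exits k T c)"
proof
  fix w
  assume "w \<in> full_ctxs k T c"
  then obtain i where i: "i \<in> ctx_block k T w" "run_break T c i"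
    and full: "\<forall>j\<in>ctx_block k T w. has_edge T c j"
    by (auto simp: full_ctxs_def)
  show "w \<in> insert (colex_ctx k T (card T - 1)) (colex_ctx k T ` run_exits k T c)"
  proof (cases "Suc i = card T")
    case True
    then have "i = card T - 1"
      by simp
    then show ?thesis
      using i by (simp add: ctx_block_def)
  next
    case False
    then have "\<not> has_edge T c (Suc i)" "Suc i < card T"
      using i by (auto simp: run_break_def ctx_block_def)
    then have "i \<in> run_exits k T c"
      using i full by (auto simp: run_exits_def ctx_block_def)
    then show ?thesis
      using i by (auto simp: ctx_block_def)
  qed
qed

(* The node after a c-run exit lacks the edge c, so it starts the block of a non-full context. *)
lemma card_run_exits_le:
  assumes "finite T"
  shows "card (run_exits k T c) \<le> card (lamk k ` T - full_ctxs k T c)"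
proof -
  let ?E = "run_exits k T c" and ?next = "\<lambda>i. colex_ctx k T (Suc i)"
  have "inj_on ?next ?E"
  proof (rule inj_onI)
    have False if "i < j" "i \<in> ?E" "j \<in> ?E" "?next i = ?next j" for i j
      using colex_ctx_between[OF assms, of "Suc i" j "Suc j" k] that by (simp add: run_exits_def)
    then show "i = j" if "i \<in> ?E" "j \<in> ?E" "?next i = ?next j" for i j
      using that by (metis linorder_neqE_nat)
  qed
  moreover have "?next ` ?E \<subseteq> lamk k ` T - full_ctxs k T c"
    using colex_ctx_in_lamk_image[OF assms]
    by (fastforce simp: run_exits_def full_ctxs_def ctx_block_def run_break_def)
  ultimately show ?thesis
    using assms by (metis card_image card_mono finite_Diff finite_imageI)
qed

lemma card_full_ctxs_le:
  assumes "finite T"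
  shows "2 * card (full_ctxs k T c) \<le> card (lamk k ` T) + 1"
proof -
  let ?W = "lamk k ` T" and ?F = "full_ctxs k T c" and ?E = "run_exits k T c"
  have finE: "finite ?E"
    by (rule finite_subset[of _ "{..<card T}"]) (auto simp: run_exits_def)
  have "card ?F \<le> card (insert (colex_ctx k T (card T - 1)) (colex_ctx k T ` ?E))"
    using finE full_ctxs_subset_run_exits by (intro card_mono) auto
  also have "\<dots> \<le> card ?E + 1"
    using finE card_image_le[OF finE, of "colex_ctx k T"] by (simp add: card_insert_if)
  finally have "card ?F \<le> card ?E + 1" .
  moreover have "?F \<subseteq> ?W"
    by (auto simp: full_ctxs_def)
  then have "card (?W - ?F) = card ?W - card ?F" "card ?F \<le> card ?W"
    using assms by (simp_all add: card_Diff_subset finite_subset card_mono)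
  ultimately show ?thesis
    using card_run_exits_le[OF assms, of k c] by linarith
qed

fun contexts :: "'a set \<Rightarrow> nat \<Rightarrow> 'a option list set" where
  "contexts S 0 = {[]}"
| "contexts S (Suc k) =
     insert (replicate (Suc k) None) ((\<lambda>(w, c). w @ [Some c]) ` (contexts S k \<times> S))"

lemma lamk_in_contexts: "set u \<subseteq> S \<Longrightarrow> lamk k u \<in> contexts S k"
proof (induction k arbitrary: u)
  case (Suc k)
  show ?case
  proof (cases u rule: rev_cases)
    case Nil
    then show ?thesis
      by (simp add: lamk_conv_take_rev)
  next
    case (snoc u' x)
    then have "lamk k u' \<in> contexts S k" "x \<in> S"
      using Suc by auto
    then show ?thesis
      using snoc by (auto simp: lam_def par_def)
  qed
qed simp

lemma finite_contexts: "finite S \<Longrightarrow> finite (contexts S k)"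
  by (induction k) simp_all

lemma card_contexts_le:
  assumes "finite S" "card S \<ge> 2"
  shows "card (contexts S k) + 1 \<le> 2 * card S ^ k"
proof (induction k)
  case (Suc k)
  have "card (contexts S (Suc k)) \<le> card ((\<lambda>(w, c). w @ [Some c]) ` (contexts S k \<times> S)) + 1"
    using assms(1) finite_contexts[OF assms(1)] by (simp add: card_insert_if)
  also have "\<dots> \<le> card (contexts S k) * card S + 1"
    using card_image_le[of "contexts S k \<times> S"] finite_contexts[OF assms(1)] assms(1)
    by (simp add: card_cartesian_product)
  finally have "card (contexts S (Suc k)) + 1 \<le> (card (contexts S k) + 1) * card S"
    using assms(2) by (simp add: algebra_simps)
  also have "\<dots> \<le> 2 * card S ^ k * card S"
    by (rule mult_le_mono1) (rule Suc.IH)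
  finally show ?case
    by (simp add: mult.commute mult.left_commute)
qed simp

lemma sum_card_full_ctxs_le:
  assumes "finite Sig" "is_trie Sig T" "card Sig \<noteq> 1"
  shows "(\<Sum>c\<in>Sig. card (full_ctxs k T c)) \<le> card Sig ^ (k + 1)"
proof (cases "card Sig = 0")
  case False
  then have "card Sig \<ge> 2"
    using assms(3) by linarith
  have fin: "finite T" and "\<forall>u\<in>T. set u \<subseteq> Sig"
    using assms(2) by (auto simp: is_trie_def)
  then have "lamk k ` T \<subseteq> contexts Sig k"
    by (auto intro: lamk_in_contexts)
  then have W: "card (lamk k ` T) + 1 \<le> 2 * card Sig ^ k"
    using card_mono[OF finite_contexts[OF assms(1)]] card_contexts_le[OF assms(1) \<open>card Sig \<ge> 2\<close>]
    by (meson add_le_mono1 le_trans)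
  have "2 * (\<Sum>c\<in>Sig. card (full_ctxs k T c)) \<le> (\<Sum>c\<in>Sig. card (lamk k ` T) + 1)"
    unfolding sum_distrib_left by (intro sum_mono card_full_ctxs_le fin)
  also have "\<dots> = card Sig * (card (lamk k ` T) + 1)"
    by simp
  also have "\<dots> \<le> card Sig * (2 * card Sig ^ k)"
    by (rule mult_le_mono2[OF W])
  finally show ?thesis
    by simp
qed (use assms(1) in simp)

lemma replicate_le_replicate_iff: "replicate i (a::'a::linorder) \<le> replicate j a \<longleftrightarrow> i \<le> j"
proof (induction i arbitrary: j)
  case (Suc i)
  then show ?case
    by (cases j) auto
qed simp

lemma is_trie_take: "is_trie Sig T \<Longrightarrow> u \<in> T \<Longrightarrow> take j u \<in> T"
proof (induction u arbitrary: j rule: rev_induct)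
  case (snoc x u)
  then have "u \<in> T"
    by (auto simp: is_trie_def)
  then show ?case
    using snoc by (cases "j \<le> length u") auto
qed simp

lemma is_trie_unary_node: "is_trie {a} T \<Longrightarrow> u \<in> T \<Longrightarrow> u = replicate (length u) a"
  by (metis is_trie_def replicate_length_same singletonD subset_iff)

context
  fixes a :: "'a::linorder" and T :: "'a list set"
  assumes trie: "is_trie {a} T"
begin

lemma unary_trie_Max_length_in: "Max (length ` T) \<in> length ` T"
  using trie by (intro Max_in) (auto simp: is_trie_def)

lemma unary_trie_not_out_iff:
  assumes "u \<in> T"
  shows "a \<notin> out T u \<longleftrightarrow> length u = Max (length ` T)"
proof -
  let ?m = "Max (length ` T)"
  have le_m: "length u' \<le> ?m" if "u' \<in> T" for u'
    using trie that by (simp add: is_trie_def)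
  obtain v where "v \<in> T" and v: "v = replicate ?m a"
    using unary_trie_Max_length_in is_trie_unary_node[OF trie] by force
  have "length u = ?m" if no_edge: "a \<notin> out T u"
  proof (rule ccontr)
    assume "length u \<noteq> ?m"
    then have "length u < ?m"
      using le_m[OF assms] by simp
    then have "take (Suc (length u)) v = replicate (Suc (length u)) a"
      by (simp add: v)
    also have "\<dots> = u @ [a]"
      using is_trie_unary_node[OF trie assms] by (metis replicate_Suc replicate_append_same)
    finally have "u @ [a] \<in> T"
      using is_trie_take[OF trie \<open>v \<in> T\<close>] by metis
    then show False
      using no_edge by (simp add: out_def)
  qed
  moreover have "a \<notin> out T u" if "length u = ?m"
    using le_m[of "u @ [a]"] that by (auto simp: out_def)
  ultimately show ?thesis
    by blast
qed

lemma unary_trie_last_colex_length: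
  "length (colex_nodes T ! (card T - 1)) = Max (length ` T)"
proof -
  let ?m = "Max (length ` T)" and ?us = "colex_nodes T"
  let ?u = "?us ! (card T - 1)"
  have fin: "finite T" and "T \<noteq> {}"
    using trie by (auto simp: is_trie_def)
  then have len: "length ?us = card T" and "card T - 1 < card T"
    by (simp_all add: length_colex_nodes card_gt_0_iff)
  then have "?u \<in> T"
    using nth_mem set_colex_nodes[OF fin] by metis
  obtain p where "p < card T" and p: "length (?us ! p) = ?m"
    using unary_trie_Max_length_in set_colex_nodes[OF fin] len by (metis imageE in_set_conv_nth)
  then have "rev (?us ! p) \<le> rev ?u"
    using sorted_nth_mono[OF sorted_rev_colex_nodes, of p "card T - 1" T] len by simp
  moreover have "?us ! p \<in> T"
    using \<open>p < card T\<close> nth_mem set_colex_nodes[OF fin] len by metis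
  then have "?us ! p = replicate ?m a"
    using is_trie_unary_node[OF trie] p by metis
  moreover have "?u = replicate (length ?u) a"
    using is_trie_unary_node[OF trie \<open>?u \<in> T\<close>] .
  ultimately have "replicate ?m a \<le> replicate (length ?u) a"
    by (metis rev_replicate)
  then show ?thesis
    using trie \<open>?u \<in> T\<close> by (simp add: replicate_le_replicate_iff is_trie_def le_antisym)
qed

lemma xbwt_runs_unary_le_1: "xbwt_runs {a} T \<le> 1"
proof -
  let ?m = "Max (length ` T)" and ?us = "colex_nodes T" and ?n = "card T"
  have fin: "finite T" and "T \<noteq> {}"
    using trie by (auto simp: is_trie_def)
  then have len: "length ?us = ?n" and "?n - 1 < ?n"
    by (simp_all add: length_colex_nodes card_gt_0_iff)
  have us_mem: "?us ! i \<in> T" if "i < ?n" for i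
    using that len set_colex_nodes[OF fin] nth_mem by metis
  have leaf: "a \<notin> out T (?us ! i) \<longleftrightarrow> ?us ! i = ?us ! (?n - 1)" if "i < ?n" for i
    using unary_trie_not_out_iff us_mem[OF that] us_mem[OF \<open>?n - 1 < ?n\<close>]
      unary_trie_last_colex_length is_trie_unary_node[OF trie] by metis
  have "{i. run_break T a i} \<subseteq> {?n - 2}"
  proof
    fix i
    assume "i \<in> {i. run_break T a i}"
    then have "i < ?n" "a \<in> out T (?us ! i)" "i = ?n - 1 \<or> a \<notin> out T (?us ! Suc i)"
      by (auto simp: run_break_def has_edge_def)
    moreover have "i \<noteq> ?n - 1"
      using calculation(2) leaf[OF \<open>?n - 1 < ?n\<close>] by auto
    ultimately have "Suc i < ?n" "a \<notin> out T (?us ! Suc i)"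
      by auto
    then have "?us ! Suc i = ?us ! (?n - 1)"
      using leaf by blast
    then have "Suc i = ?n - 1"
      using distinct_colex_nodes[OF fin] len \<open>Suc i < ?n\<close> \<open>?n - 1 < ?n\<close>
      by (simp add: nth_eq_iff_index_eq)
    then show "i \<in> {?n - 2}"
      by simp
  qed
  then have "card {i. run_break T a i} \<le> 1"
    using card_mono[of "{?n - 2}"] by fastforce
  then show ?thesis
    by (simp add: xbwt_runs_conv_run_break)
qed

end

theorem corollary6:
  fixes Sig :: "('a::linorder) set" and T :: "'a list set" and k :: nat
  assumes "finite Sig"
    and "is_trie Sig T"
  shows "real (xbwt_runs Sig T)
           \<le> real (card T) * Hk Sig k T + real (card Sig) ^ (k + 1)"
proof -
  have fin: "finite T" and ne: "T \<noteq> {}"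
    using assms(2) by (auto simp: is_trie_def)
  show ?thesis
  proof (cases "card Sig = 1")
    case True
    then obtain a where "Sig = {a}"
      by (rule card_1_singletonE)
    then have "real (xbwt_runs Sig T) \<le> 1"
      using xbwt_runs_unary_le_1 assms(2) by simp
    moreover have "0 \<le> real (card T) * Hk Sig k T"
      using Hk_nonneg[OF fin ne] by simp
    moreover have "real (card Sig) ^ (k + 1) = 1"
      using True by simp
    ultimately show ?thesis
      by linarith
  next
    case False
    have "real (\<Sum>c\<in>Sig. card (full_ctxs k T c)) \<le> real (card Sig) ^ (k + 1)"
      using sum_card_full_ctxs_le[OF assms False, of k] by (metis of_nat_le_iff of_nat_power)
    then show ?thesis
      using xbwt_runs_le_entropy_full_ctxs[OF fin ne, of Sig k] by linarith
  qed
qed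

end
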